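(* For each $\alpha\in\mathbb{Q}\cap[0,1]$ and each $\varepsilon>0$, there is a finite set $\Psi$ of definable predicates that weakly defines an $\varepsilon$-distal cell decomposition over $M_{[0,1]}$ for $\varphi_\alpha(x;y)$.
   Context: $M_{[0,1]}$ is the set of continuous nondecreasing functions $f:[0,1]\to[0,1]$ with $f(0)=0$, $f(1)=1$, with the sup metric, regarded as a metric structure in the language of binary predicates $\varphi_\alpha$ ($\alpha\in\mathbb{Q}\cap[0,1]$), where $\varphi_\alpha(f,g)=f(t)$ for any $t$ with $f(t)+g(t)=\alpha$ (independent of the choice of $t$). If $\phi(x;y)$ is a definable predicate and $\Psi$ is a finite set of definable predicates each of the form $\psi(x;y_1,\dots,y_k)$, then $\Psi$ weakly defines an $\varepsilon$-distal cell decomposition over $M$ for $\phi(x;y)$ if for every finite $B\subseteq M^y$ with $|B|\geq 2$ and every $a\in M^x$, there are $\psi\in\Psi$ and $b_1,\dots,b_k\in B$ such that $\psi(a;b_1,\dots,b_k)>0$ and for all $a'\in M^x$, $\psi(a';b_1,\dots,b_k)>0$ implies $|\phi(a;b)-\phi(a';b)|\leq\varepsilon$ for all $b\in B$. *)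

theory Defs
  imports "HOL-Analysis.Analysis"
begin

definition Mset :: "(real \<Rightarrow> real) set" where
  "Mset = {f. continuous_on {0..1} f \<and> mono_on {0..1} f \<and> f 0 = 0 \<and> f 1 = 1
              \<and> (\<forall>t. t \<notin> {0..1} \<longrightarrow> f t = 0)}"

definition dM :: "(real \<Rightarrow> real) \<Rightarrow> (real \<Rightarrow> real) \<Rightarrow> real" where
  "dM f g = (SUP t\<in>{0..1}. \<bar>f t - g t\<bar>)"

definition phiA :: "real \<Rightarrow> (real \<Rightarrow> real) \<Rightarrow> (real \<Rightarrow> real) \<Rightarrow> real" where
  "phiA \<alpha> f g = f (SOME t. t \<in> {0..1} \<and> f t + g t = \<alpha>)"

text \<open>Interpretations in M of continuous-logic formulas, with variables indexed by nat
  (assignments nat => M).\<close>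

inductive_set Fm :: "((nat \<Rightarrow> (real \<Rightarrow> real)) \<Rightarrow> real) set" where
  atom_d: "(\<lambda>a. dM (a i) (a j)) \<in> Fm"
| atom_phi: "\<alpha> \<in> \<rat> \<Longrightarrow> 0 \<le> \<alpha> \<Longrightarrow> \<alpha> \<le> 1 \<Longrightarrow> (\<lambda>a. phiA \<alpha> (a i) (a j)) \<in> Fm"
| conn: "(\<forall>i<n. P i \<in> Fm) \<Longrightarrow>
         continuous_on {v :: nat \<Rightarrow> real. \<forall>i. v i \<in> {0..1}} u \<Longrightarrow>
         u ` {v. \<forall>i. v i \<in> {0..1}} \<subseteq> {0..1} \<Longrightarrow>
         (\<lambda>a. u (\<lambda>i. if i < n then P i a else 0)) \<in> Fm"
| sup: "P \<in> Fm \<Longrightarrow> (\<lambda>a. SUP m\<in>Mset. P (a(i := m))) \<in> Fm"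
| inf: "P \<in> Fm \<Longrightarrow> (\<lambda>a. INF m\<in>Mset. P (a(i := m))) \<in> Fm"

definition definable_pred :: "nat \<Rightarrow> ((nat \<Rightarrow> (real \<Rightarrow> real)) \<Rightarrow> real) \<Rightarrow> bool" where
  "definable_pred n Q \<longleftrightarrow>
     (\<forall>a b. (\<forall>i. a i \<in> Mset) \<longrightarrow> (\<forall>i. b i \<in> Mset) \<longrightarrow> (\<forall>i<n. a i = b i) \<longrightarrow> Q a = Q b) \<and>
     (\<forall>e>0. \<exists>P\<in>Fm. \<forall>a. (\<forall>i. a i \<in> Mset) \<longrightarrow> \<bar>Q a - P a\<bar> \<le> e)"

text \<open>Assignment x := a, y_1..y_k := bs (variable 0 is x, variables 1..k are y_1..y_k).\<close>
definition asg :: "(real \<Rightarrow> real) \<Rightarrow> (real \<Rightarrow> real) list \<Rightarrow> nat \<Rightarrow> (real \<Rightarrow> real)" where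
  "asg a bs = (\<lambda>i. if i = 0 then a else if i \<le> length bs then bs ! (i - 1) else a)"

text \<open>Psi is a set of pairs (k, psi) with psi(x; y_1..y_k) a definable predicate in k+1 variables.
  Weak definition of an eps-distal cell decomposition over M for phi_alpha(x;y).\<close>
definition weakly_defines_distal_cd ::
  "(nat \<times> ((nat \<Rightarrow> (real \<Rightarrow> real)) \<Rightarrow> real)) set \<Rightarrow> real \<Rightarrow> real \<Rightarrow> bool" where
  "weakly_defines_distal_cd \<Psi> \<epsilon> \<alpha> \<longleftrightarrow>
    (\<forall>B. finite B \<and> B \<subseteq> Mset \<and> card B \<ge> 2 \<longrightarrow>
      (\<forall>a\<in>Mset. \<exists>(k, \<psi>)\<in>\<Psi>. \<exists>bs. length bs = k \<and> set bs \<subseteq> B \<and>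
          \<psi> (asg a bs) > 0 \<and>
          (\<forall>a'\<in>Mset. \<psi> (asg a' bs) > 0 \<longrightarrow>
              (\<forall>b\<in>B. \<bar>phiA \<alpha> a b - phiA \<alpha> a' b\<bar> \<le> \<epsilon>))))"

end

theory Submission
  imports Defs
begin

text \<open>
  Fix a threshold c.  Evaluating at a crossing point shows that \<phi>(x, b) > c iff x t > c for
  some t with b t < \<alpha> - c; since b is nondecreasing, these t form an initial segment of [0, 1].
  Hence, as b varies, the cells {x. \<phi>(x, b) > c} form a chain under inclusion, and likewise the
  cells {x. \<phi>(x, b) < c}.  Given a and B, for each of the finitely many rays (j\<epsilon>, \<infinity>) and
  (-\<infinity>, j\<epsilon>) met by some \<phi>(a, b), b \<in> B, take the b whose cell is least.  The product of
  continuous cutoffs that are positive exactly on these least cells is a quantifier-free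
  predicate \<psi>; any a' with \<psi> > 0 lies in every cell of B containing a, so for each b \<in> B the
  values \<phi>(a, b) and \<phi>(a', b) lie on the same side of every grid point j\<epsilon>, hence are
  \<epsilon>-close.
\<close>

lemma Mset_mono_on: "f \<in> Mset \<Longrightarrow> mono_on {0..1} f"
  by (simp add: Mset_def)

lemma Mset_le: "f \<in> Mset \<Longrightarrow> 0 \<le> s \<Longrightarrow> s \<le> t \<Longrightarrow> t \<le> 1 \<Longrightarrow> f s \<le> f t"
  by (auto dest: Mset_mono_on intro: mono_onD)

lemma Mset_bounded: "f \<in> Mset \<Longrightarrow> t \<in> {0..1} \<Longrightarrow> f t \<in> {0..1}"
  using Mset_le[of f 0 t] Mset_le[of f t 1] by (auto simp: Mset_def)

lemma crossing_exists:
  assumes "x \<in> Mset" "b \<in> Mset" "\<alpha> \<in> {0..1}"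
  shows "\<exists>t\<in>{0..1}. x t + b t = \<alpha>"
proof -
  have "continuous_on {0..1} (\<lambda>t. x t + b t)"
    using assms by (intro continuous_intros) (auto simp: Mset_def)
  moreover have "x 0 + b 0 \<le> \<alpha>" "\<alpha> \<le> x 1 + b 1"
    using assms by (auto simp: Mset_def)
  ultimately show ?thesis
    using IVT'[of "\<lambda>t. x t + b t" 0 \<alpha> 1] by auto
qed

text \<open>The choice of crossing is immaterial because x and b are both nondecreasing.\<close>

lemma phiA_eq:
  assumes "x \<in> Mset" "b \<in> Mset" "\<alpha> \<in> {0..1}" "t \<in> {0..1}" "x t + b t = \<alpha>"
  shows "phiA \<alpha> x b = x t"
proof -
  let ?s = "SOME s. s \<in> {0..1} \<and> x s + b s = \<alpha>"
  have s: "?s \<in> {0..1}" "x ?s + b ?s = \<alpha>"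
    using someI_ex[OF crossing_exists[OF assms(1-3), unfolded Bex_def]] by auto
  have "x ?s = x t"
  proof (cases "?s \<le> t")
    case True
    then show ?thesis using Mset_le[OF assms(1), of ?s t] Mset_le[OF assms(2), of ?s t] s assms(4,5) by auto
  next
    case False
    then show ?thesis using Mset_le[OF assms(1), of t ?s] Mset_le[OF assms(2), of t ?s] s assms(4,5) by auto
  qed
  then show ?thesis by (simp add: phiA_def)
qed

lemma phiA_crossing:
  assumes "x \<in> Mset" "b \<in> Mset" "\<alpha> \<in> {0..1}"
  obtains t where "t \<in> {0..1}" "x t + b t = \<alpha>" "phiA \<alpha> x b = x t"
  using crossing_exists[OF assms] phiA_eq[OF assms] by blast

lemma phiA_bounded:
  assumes "x \<in> Mset" "b \<in> Mset" "\<alpha> \<in> {0..1}"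
  shows "phiA \<alpha> x b \<in> {0..1}"
  by (metis assms phiA_crossing Mset_bounded)

lemma phiA_swap:
  assumes "x \<in> Mset" "b \<in> Mset" "\<alpha> \<in> {0..1}"
  shows "phiA \<alpha> b x = \<alpha> - phiA \<alpha> x b"
proof -
  obtain t where t: "t \<in> {0..1}" "x t + b t = \<alpha>" "phiA \<alpha> x b = x t"
    using phiA_crossing[OF assms] .
  then have "phiA \<alpha> b x = b t"
    using phiA_eq[OF assms(2,1,3) t(1)] by (simp add: add.commute)
  with t show ?thesis by simp
qed

lemma phiA_greater_iff:
  assumes "x \<in> Mset" "b \<in> Mset" "\<alpha> \<in> {0..1}"
  shows "c < phiA \<alpha> x b \<longleftrightarrow> (\<exists>t\<in>{t\<in>{0..1}. b t < \<alpha> - c}. c < x t)"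
proof -
  obtain s where s: "s \<in> {0..1}" "x s + b s = \<alpha>" "phiA \<alpha> x b = x s"
    using phiA_crossing[OF assms] .
  show ?thesis
  proof
    assume "c < phiA \<alpha> x b"
    with s show "\<exists>t\<in>{t\<in>{0..1}. b t < \<alpha> - c}. c < x t" by force
  next
    assume "\<exists>t\<in>{t\<in>{0..1}. b t < \<alpha> - c}. c < x t"
    then obtain t where t: "t \<in> {0..1}" "b t < \<alpha> - c" "c < x t" by blast
    show "c < phiA \<alpha> x b"
    proof (cases "t \<le> s")
      case True
      then show ?thesis using Mset_le[OF assms(1), of t s] s t by auto
    next
      case False
      \<comment> \<open>then b s \<le> b t < \<alpha> - c, so x s = \<alpha> - b s > c\<close>
      then show ?thesis using Mset_le[OF assms(2), of s t] s t by auto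
    qed
  qed
qed

lemma phiA_less_iff:
  assumes "x \<in> Mset" "b \<in> Mset" "\<alpha> \<in> {0..1}"
  shows "phiA \<alpha> x b < c \<longleftrightarrow> (\<exists>t\<in>{t\<in>{0..1}. \<alpha> - c < b t}. x t < c)"
proof -
  have "phiA \<alpha> x b < c \<longleftrightarrow> \<alpha> - c < phiA \<alpha> b x"
    using phiA_swap[OF assms] by auto
  also have "\<dots> \<longleftrightarrow> (\<exists>t\<in>{t\<in>{0..1}. \<alpha> - c < b t}. x t < c)"
    using phiA_greater_iff[OF assms(2,1,3)] by auto
  finally show ?thesis .
qed

lemma mono_on_sublevel_sets_nested:
  fixes f g :: "'a::linorder \<Rightarrow> 'b::linorder"
  assumes "mono_on S f" "mono_on S g"
  shows "{t\<in>S. f t < d} \<subseteq> {t\<in>S. g t < d} \<or> {t\<in>S. g t < d} \<subseteq> {t\<in>S. f t < d}"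
proof (rule ccontr)
  assume "\<not> ?thesis"
  then obtain s t where "s \<in> S" "f s < d" "\<not> g s < d" "t \<in> S" "g t < d" "\<not> f t < d"
    by blast
  then show False
    using assms by (meson le_less_trans linorder_le_cases mono_onD)
qed

lemma mono_on_superlevel_sets_nested:
  fixes f g :: "'a::linorder \<Rightarrow> 'b::linorder"
  assumes "mono_on S f" "mono_on S g"
  shows "{t\<in>S. d < f t} \<subseteq> {t\<in>S. d < g t} \<or> {t\<in>S. d < g t} \<subseteq> {t\<in>S. d < f t}"
proof (rule ccontr)
  assume "\<not> ?thesis"
  then obtain s t where "s \<in> S" "d < f s" "\<not> d < g s" "t \<in> S" "d < g t" "\<not> d < f t"
    by blast
  then show False
    using assms by (meson less_le_trans linorder_le_cases mono_onD)
qed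

fun open_ray :: "real \<times> bool \<Rightarrow> real set" where
  "open_ray (c, up) = (if up then {c<..} else {..<c})"

definition phi_cell :: "real \<Rightarrow> real \<times> bool \<Rightarrow> (real \<Rightarrow> real) \<Rightarrow> (real \<Rightarrow> real) set" where
  "phi_cell \<alpha> r b = {x \<in> Mset. phiA \<alpha> x b \<in> open_ray r}"

lemma phi_cells_nested:
  assumes "b1 \<in> Mset" "b2 \<in> Mset" "\<alpha> \<in> {0..1}"
  shows "phi_cell \<alpha> r b1 \<subseteq> phi_cell \<alpha> r b2 \<or> phi_cell \<alpha> r b2 \<subseteq> phi_cell \<alpha> r b1"
proof -
  obtain c up where r: "r = (c, up)" by fastforce
  have mono: "mono_on {0..1} b1" "mono_on {0..1} b2"
    using assms by (simp_all add: Mset_mono_on)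
  show ?thesis
  proof (cases up)
    case True
    have "phi_cell \<alpha> r b = {x \<in> Mset. \<exists>t\<in>{t\<in>{0..1}. b t < \<alpha> - c}. c < x t}" if "b \<in> Mset" for b
      using phiA_greater_iff[OF _ that assms(3)] r True by (auto simp: phi_cell_def)
    then show ?thesis
      using mono_on_sublevel_sets_nested[OF mono, of "\<alpha> - c"] assms by blast
  next
    case False
    have "phi_cell \<alpha> r b = {x \<in> Mset. \<exists>t\<in>{t\<in>{0..1}. \<alpha> - c < b t}. x t < c}" if "b \<in> Mset" for b
      using phiA_less_iff[OF _ that assms(3)] r False by (auto simp: phi_cell_def)
    then show ?thesis
      using mono_on_superlevel_sets_nested[OF mono, of "\<alpha> - c"] assms by blast
  qed
qed

lemma least_phi_cell_exists:
  assumes "finite G" "G \<noteq> {}" "G \<subseteq> Mset" "\<alpha> \<in> {0..1}"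
  shows "\<exists>m\<in>G. \<forall>b\<in>G. phi_cell \<alpha> r m \<subseteq> phi_cell \<alpha> r b"
proof -
  have "transp_on G (\<lambda>b1 b2. phi_cell \<alpha> r b1 \<subseteq> phi_cell \<alpha> r b2)"
    by (auto intro: transp_onI)
  moreover have "totalp_on G (\<lambda>b1 b2. phi_cell \<alpha> r b1 \<subseteq> phi_cell \<alpha> r b2)"
    using phi_cells_nested[OF _ _ assms(4)] assms(3) by (intro totalp_onI) blast
  ultimately obtain m where "m \<in> G" "\<forall>b\<in>G. b \<noteq> m \<longrightarrow> phi_cell \<alpha> r m \<subseteq> phi_cell \<alpha> r b"
    using Finite_Set.bex_least_element[OF assms(1,2)] by blast
  then show ?thesis by (metis subset_refl)
qed

fun ray_weight :: "real \<times> bool \<Rightarrow> real \<Rightarrow> real" where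
  "ray_weight (c, up) y = max 0 (min 1 (if up then y - c else c - y))"

lemma ray_weight_pos_iff: "0 < ray_weight r y \<longleftrightarrow> y \<in> open_ray r"
  by (cases r) auto

lemma ray_weight_bounded: "0 \<le> ray_weight r y" "ray_weight r y \<le> 1"
  by (cases r; simp)+

lemma continuous_on_ray_weight: "continuous_on S (\<lambda>w :: nat \<Rightarrow> real. ray_weight r (w i))"
proof -
  have "continuous_on S (\<lambda>w :: nat \<Rightarrow> real. w i)"
    by (rule continuous_on_subset[OF continuous_on_product_coordinates]) simp
  then show ?thesis
    by (cases r; cases "snd r") (auto intro!: continuous_intros)
qed

definition cell_pred :: "real \<Rightarrow> (real \<times> bool) list \<Rightarrow> (nat \<Rightarrow> real \<Rightarrow> real) \<Rightarrow> real" where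
  "cell_pred \<alpha> rs v = (\<Prod>i<length rs. ray_weight (rs ! i) (phiA \<alpha> (v 0) (v (Suc i))))"

lemma cell_pred_in_Fm:
  assumes "\<alpha> \<in> \<rat>" "\<alpha> \<in> {0..1}"
  shows "cell_pred \<alpha> rs \<in> Fm"
proof -
  let ?n = "length rs"
  let ?P = "\<lambda>i v. phiA \<alpha> (v 0) (v (Suc i))"
  let ?u = "\<lambda>w :: nat \<Rightarrow> real. \<Prod>i<?n. ray_weight (rs ! i) (w i)"
  have "(\<lambda>v. ?u (\<lambda>i. if i < ?n then ?P i v else 0)) \<in> Fm"
  proof (rule Fm.conn)
    show "\<forall>i<?n. ?P i \<in> Fm"
      using assms by (auto intro: Fm.atom_phi)
    show "continuous_on {w. \<forall>i. w i \<in> {0..1}} ?u"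
      by (intro continuous_on_prod continuous_on_ray_weight)
    show "?u ` {w. \<forall>i. w i \<in> {0..1}} \<subseteq> {0..1}"
      by (auto intro!: prod_nonneg prod_le_1 simp: ray_weight_bounded)
  qed
  moreover have "cell_pred \<alpha> rs = (\<lambda>v. ?u (\<lambda>i. if i < ?n then ?P i v else 0))"
    unfolding cell_pred_def by (intro ext prod.cong) auto
  ultimately show ?thesis by simp
qed

lemma definable_pred_if_Fm:
  assumes "P \<in> Fm" "\<And>v w. (\<forall>i<n. v i = w i) \<Longrightarrow> P v = P w"
  shows "definable_pred n P"
  using assms unfolding definable_pred_def by force

lemma definable_pred_cell_pred:
  assumes "\<alpha> \<in> \<rat>" "\<alpha> \<in> {0..1}"
  shows "definable_pred (Suc (length rs)) (cell_pred \<alpha> rs)"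
  using cell_pred_in_Fm[OF assms] by (rule definable_pred_if_Fm) (auto simp: cell_pred_def)

lemma cell_pred_asg_pos_iff:
  assumes "length bs = length rs"
  shows "0 < cell_pred \<alpha> rs (asg x bs) \<longleftrightarrow> (\<forall>i<length rs. phiA \<alpha> x (bs ! i) \<in> open_ray (rs ! i))"
proof -
  let ?f = "\<lambda>i. ray_weight (rs ! i) (phiA \<alpha> x (bs ! i))"
  have "cell_pred \<alpha> rs (asg x bs) = (\<Prod>i<length rs. ?f i)"
    unfolding cell_pred_def asg_def using assms by (intro prod.cong) auto
  also have "0 < \<dots> \<longleftrightarrow> (\<forall>i<length rs. 0 < ?f i)"
    using ray_weight_bounded(1)[of "rs ! _"]
    by (metis (no_types, lifting) finite_lessThan lessThan_iff less_eq_real_def prod_pos prod_zero_iff)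
  finally show ?thesis by (simp add: ray_weight_pos_iff)
qed

lemma cell_pred_separates:
  assumes "finite R" "finite B" "B \<subseteq> Mset" "a \<in> Mset" "\<alpha> \<in> {0..1}"
  obtains rs bs where "set rs \<subseteq> R" "distinct rs" "length bs = length rs" "set bs \<subseteq> B"
    "0 < cell_pred \<alpha> rs (asg a bs)"
    "\<And>a' b r. a' \<in> Mset \<Longrightarrow> 0 < cell_pred \<alpha> rs (asg a' bs) \<Longrightarrow> b \<in> B \<Longrightarrow> r \<in> R \<Longrightarrow>
       phiA \<alpha> a b \<in> open_ray r \<Longrightarrow> phiA \<alpha> a' b \<in> open_ray r"
proof -
  define G where "G r = {b \<in> B. a \<in> phi_cell \<alpha> r b}" for r
  define m where "m r = (SOME m. m \<in> G r \<and> (\<forall>b\<in>G r. phi_cell \<alpha> r m \<subseteq> phi_cell \<alpha> r b))" for r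
  have m: "m r \<in> G r" "\<And>b. b \<in> G r \<Longrightarrow> phi_cell \<alpha> r (m r) \<subseteq> phi_cell \<alpha> r b"
    if "G r \<noteq> {}" for r
  proof -
    have "finite (G r)" "G r \<subseteq> Mset"
      using assms(2,3) by (auto simp: G_def)
    then have "\<exists>m. m \<in> G r \<and> (\<forall>b\<in>G r. phi_cell \<alpha> r m \<subseteq> phi_cell \<alpha> r b)"
      using least_phi_cell_exists[OF _ that _ assms(5)] by blast
    from someI_ex[OF this] show "m r \<in> G r" "\<And>b. b \<in> G r \<Longrightarrow> phi_cell \<alpha> r (m r) \<subseteq> phi_cell \<alpha> r b"
      unfolding m_def by blast+
  qed
  obtain xs where xs: "set xs = R" "distinct xs"
    using finite_distinct_list[OF assms(1)] by blast
  define rs where "rs = filter (\<lambda>r. G r \<noteq> {}) xs"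
  define bs where "bs = map m rs"
  have rs: "set rs = {r \<in> R. G r \<noteq> {}}" "distinct rs"
    using xs by (auto simp: rs_def)
  have len: "length bs = length rs"
    by (simp add: bs_def)
  have pos_iff: "0 < cell_pred \<alpha> rs (asg x bs) \<longleftrightarrow> (\<forall>r\<in>set rs. x \<in> phi_cell \<alpha> r (m r))"
    if "x \<in> Mset" for x
    unfolding cell_pred_asg_pos_iff[OF len] using that
    by (simp add: bs_def phi_cell_def all_set_conv_all_nth del: open_ray.simps)
  show ?thesis
  proof (rule that[of rs bs])
    show "set bs \<subseteq> B"
      using m(1) rs(1) by (auto simp: bs_def G_def)
    show "0 < cell_pred \<alpha> rs (asg a bs)"
      using m(1) rs(1) assms(4) by (auto simp: pos_iff G_def)
  next
    fix a' b r
    assume a': "a' \<in> Mset" "0 < cell_pred \<alpha> rs (asg a' bs)"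
      and b: "b \<in> B" "r \<in> R" "phiA \<alpha> a b \<in> open_ray r"
    then have "b \<in> G r"
      using assms(3,4) by (auto simp: G_def phi_cell_def)
    moreover from this have "a' \<in> phi_cell \<alpha> r (m r)"
      using pos_iff[OF a'(1)] a'(2) b(2) rs(1) by blast
    ultimately have "a' \<in> phi_cell \<alpha> r b"
      using m(2) by blast
    then show "phiA \<alpha> a' b \<in> open_ray r"
      by (simp add: phi_cell_def)
  qed (use rs len in auto)
qed

lemma abs_diff_le_if_same_side_of_levels:
  fixes v v' \<epsilon> :: real
  assumes "\<And>l. l \<in> L \<Longrightarrow> v < l \<Longrightarrow> v' < l" "\<And>l. l \<in> L \<Longrightarrow> l < v \<Longrightarrow> l < v'"
    and "\<exists>l\<in>L. v < l \<and> l \<le> v + \<epsilon>" "\<exists>l\<in>L. v' < l \<and> l \<le> v' + \<epsilon>"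
  shows "\<bar>v - v'\<bar> \<le> \<epsilon>"
proof -
  obtain l where "l \<in> L" "v < l" "l \<le> v + \<epsilon>"
    using assms(3) by blast
  with assms(1) have "v' \<le> v + \<epsilon>"
    by force
  moreover obtain l' where "l' \<in> L" "v' < l'" "l' \<le> v' + \<epsilon>"
    using assms(4) by blast
  with assms(2) have "v \<le> v' + \<epsilon>"
    by force
  ultimately show ?thesis
    by linarith
qed

lemma grid_level_above:
  fixes \<epsilon> w :: real
  assumes "0 < \<epsilon>" "w \<in> {0..1}"
  shows "\<exists>j \<le> nat \<lfloor>1 / \<epsilon>\<rfloor> + 1. w < real j * \<epsilon> \<and> real j * \<epsilon> \<le> w + \<epsilon>"
proof (intro exI conjI)
  let ?k = "\<lfloor>w / \<epsilon>\<rfloor>"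
  have j: "real (nat ?k + 1) = of_int ?k + 1"
    using assms by simp
  have "of_int ?k * \<epsilon> \<le> w"
    using of_int_floor_le[of "w / \<epsilon>"] pos_le_divide_eq[OF assms(1)] by blast
  moreover have "w < (of_int ?k + 1) * \<epsilon>"
    using real_of_int_floor_add_one_gt[of "w / \<epsilon>"] pos_divide_less_eq[OF assms(1)] by blast
  ultimately show "w < real (nat ?k + 1) * \<epsilon>" "real (nat ?k + 1) * \<epsilon> \<le> w + \<epsilon>"
    unfolding j by (simp_all add: distrib_right)
  have "?k \<le> \<lfloor>1 / \<epsilon>\<rfloor>"
    using assms by (intro floor_mono divide_right_mono) auto
  then show "nat ?k + 1 \<le> nat \<lfloor>1 / \<epsilon>\<rfloor> + 1"
    by simp
qed

definition grid_rays :: "real \<Rightarrow> (real \<times> bool) set" where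
  "grid_rays \<epsilon> = (\<lambda>(j, up). (real j * \<epsilon>, up)) ` ({..nat \<lfloor>1 / \<epsilon>\<rfloor> + 1} \<times> UNIV)"

lemma finite_grid_rays: "finite (grid_rays \<epsilon>)"
  by (simp add: grid_rays_def)

lemma abs_diff_le_if_same_grid_rays:
  fixes v v' \<epsilon> :: real
  assumes "0 < \<epsilon>" "v \<in> {0..1}" "v' \<in> {0..1}"
    and same: "\<And>r. r \<in> grid_rays \<epsilon> \<Longrightarrow> v \<in> open_ray r \<Longrightarrow> v' \<in> open_ray r"
  shows "\<bar>v - v'\<bar> \<le> \<epsilon>"
proof (rule abs_diff_le_if_same_side_of_levels)
  let ?L = "{real j * \<epsilon> | j. j \<le> nat \<lfloor>1 / \<epsilon>\<rfloor> + 1}"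
  have rays: "(l, up) \<in> grid_rays \<epsilon>" if "l \<in> ?L" for l up
    using that by (force simp: grid_rays_def)
  show "v' < l" if "l \<in> ?L" "v < l" for l
    using same[OF rays[OF that(1), of False]] that(2) by simp
  show "l < v'" if "l \<in> ?L" "l < v" for l
    using same[OF rays[OF that(1), of True]] that(2) by simp
  show "\<exists>l\<in>?L. v < l \<and> l \<le> v + \<epsilon>" "\<exists>l\<in>?L. v' < l \<and> l \<le> v' + \<epsilon>"
    using grid_level_above[OF assms(1,2)] grid_level_above[OF assms(1,3)] by blast+
qed

definition cell_preds :: "real \<Rightarrow> (real \<times> bool) set \<Rightarrow> (nat \<times> ((nat \<Rightarrow> real \<Rightarrow> real) \<Rightarrow> real)) set" where
  "cell_preds \<alpha> R = (\<lambda>rs. (length rs, cell_pred \<alpha> rs)) ` {rs. set rs \<subseteq> R \<and> distinct rs}"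

lemma finite_cell_preds: "finite R \<Longrightarrow> finite (cell_preds \<alpha> R)"
  unfolding cell_preds_def by (simp add: finite_subset_distinct)

lemma definable_cell_preds:
  assumes "\<alpha> \<in> \<rat>" "\<alpha> \<in> {0..1}"
  shows "\<forall>(k, \<psi>)\<in>cell_preds \<alpha> R. definable_pred (Suc k) \<psi>"
  using definable_pred_cell_pred[OF assms] by (auto simp: cell_preds_def)

lemma weakly_defines_distal_cd_cell_preds_grid:
  assumes "0 < \<epsilon>" "\<alpha> \<in> {0..1}"
  shows "weakly_defines_distal_cd (cell_preds \<alpha> (grid_rays \<epsilon>)) \<epsilon> \<alpha>"
  unfolding weakly_defines_distal_cd_def
proof (intro allI impI ballI)
  fix B a
  assume B: "finite B \<and> B \<subseteq> Mset \<and> 2 \<le> card B" and a: "a \<in> Mset"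
  obtain rs bs where rs: "set rs \<subseteq> grid_rays \<epsilon>" "distinct rs" "length bs = length rs" "set bs \<subseteq> B"
      "0 < cell_pred \<alpha> rs (asg a bs)"
    and same: "\<And>a' b r. a' \<in> Mset \<Longrightarrow> 0 < cell_pred \<alpha> rs (asg a' bs) \<Longrightarrow> b \<in> B \<Longrightarrow>
        r \<in> grid_rays \<epsilon> \<Longrightarrow> phiA \<alpha> a b \<in> open_ray r \<Longrightarrow> phiA \<alpha> a' b \<in> open_ray r"
    using cell_pred_separates[OF finite_grid_rays _ _ a assms(2)] B by blast
  have "\<bar>phiA \<alpha> a b - phiA \<alpha> a' b\<bar> \<le> \<epsilon>"
    if a': "a' \<in> Mset" "0 < cell_pred \<alpha> rs (asg a' bs)" and b: "b \<in> B" for a' b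
  proof (rule abs_diff_le_if_same_grid_rays[OF assms(1)])
    show "phiA \<alpha> a b \<in> {0..1}" "phiA \<alpha> a' b \<in> {0..1}"
      using phiA_bounded a a'(1) b B assms(2) by blast+
    show "phiA \<alpha> a' b \<in> open_ray r" if "r \<in> grid_rays \<epsilon>" "phiA \<alpha> a b \<in> open_ray r" for r
      using same[OF a' b that] .
  qed
  moreover have "(length rs, cell_pred \<alpha> rs) \<in> cell_preds \<alpha> (grid_rays \<epsilon>)"
    using rs(1,2) by (auto simp: cell_preds_def)
  ultimately show "\<exists>(k, \<psi>)\<in>cell_preds \<alpha> (grid_rays \<epsilon>). \<exists>bs. length bs = k \<and> set bs \<subseteq> B \<and>
      \<psi> (asg a bs) > 0 \<and>
      (\<forall>a'\<in>Mset. \<psi> (asg a' bs) > 0 \<longrightarrow> (\<forall>b\<in>B. \<bar>phiA \<alpha> a b - phiA \<alpha> a' b\<bar> \<le> \<epsilon>))"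
    using rs(3-5) by blast
qed

theorem mainTheorem5:
  fixes \<alpha> \<epsilon> :: real
  assumes "\<alpha> \<in> \<rat>" and "0 \<le> \<alpha>" and "\<alpha> \<le> 1" and "\<epsilon> > 0"
  shows "\<exists>\<Psi>. finite \<Psi> \<and> (\<forall>(k, \<psi>)\<in>\<Psi>. definable_pred (Suc k) \<psi>) \<and>
             weakly_defines_distal_cd \<Psi> \<epsilon> \<alpha>"
proof (intro exI conjI)
  have \<alpha>: "\<alpha> \<in> {0..1}"
    using assms(2,3) by simp
  show "finite (cell_preds \<alpha> (grid_rays \<epsilon>))"
    by (rule finite_cell_preds[OF finite_grid_rays])
  show "\<forall>(k, \<psi>)\<in>cell_preds \<alpha> (grid_rays \<epsilon>). definable_pred (Suc k) \<psi>"
    by (rule definable_cell_preds[OF assms(1) \<alpha>])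
  show "weakly_defines_distal_cd (cell_preds \<alpha> (grid_rays \<epsilon>)) \<epsilon> \<alpha>"
    by (rule weakly_defines_distal_cd_cell_preds_grid[OF assms(4) \<alpha>])
qed

end
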